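(* Fix $x\in\mathcal{X}$ and $\alpha\in(0,1)$. Suppose Assumption A1 holds and $P_{\theta\sim\mathbb{P}^N}(H(x;\theta)=v_\alpha(x))=0$. Then $$\frac1n\sum_{i=1}^n\Big|\mathbb{1}_{\{\hat H^m(x;\theta_i)\ge\hat v^{n,m}_\alpha(x)\}}-\mathbb{1}_{\{H(x;\theta_i)\ge v_\alpha(x)\}}\Big|\to0\quad\text{with probability }1\text{ as } n,m\to\infty.$$
   Context: Setting. $\mathcal{X}\subset\mathbb{R}$ is a nonempty compact set of decisions. $\{\mathbb{P}_\theta\}_{\theta\in\Theta}$ is a parametric family of distributions of a random vector $\xi$, and $\mathbb{P}^N$ is a fixed (posterior) probability distribution on $\Theta$. $h:\mathcal{X}\times\mathbb{R}^{d_2}\to\mathbb{R}$, and $H(x;\theta) := \mathbb{E}_{\xi\sim\mathbb{P}_\theta}[h(x,\xi)]$, viewed as a random variable induced by $\theta\sim\mathbb{P}^N$. $\mathbb{E}_\theta$ denotes expectation over $\theta\sim\mathbb{P}^N$, $\mathbb{E}_{\mathbb{P}_\theta}$ expectation over $\xi\sim\mathbb{P}_\theta$, and $\mathbb{E}_{\theta,\mathbb{P}_\theta}[\cdot]:=\mathbb{E}_\theta[\mathbb{E}_{\mathbb{P}_\theta}[\cdot]]$. $\xi(\theta)$ denotes a sample from $\mathbb{P}_\theta$. Sampling and estimators. Draw $\theta_1,\dots,\theta_n$ i.i.d. from $\mathbb{P}^N$ and, for each $i$, $\xi_1(\theta_i),\dots,\xi_m(\theta_i)$ i.i.d. from $\mathbb{P}_{\theta_i}$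 (conditionally independent across $i$). Set $\hat H^m(x;\theta):=\frac1m\sum_{j=1}^m h(x,\xi_j(\theta))$. Let $\hat\theta^m_{(1)},\dots,\hat\theta^m_{(n)}$ be a reordering of $\theta_1,\dots,\theta_n$ with $\hat H^m(x;\hat\theta^m_{(1)})\le\dots\le\hat H^m(x;\hat\theta^m_{(n)})$, and $\hat v^{n,m}_\alpha(x):=\hat H^m(x;\hat\theta^m_{(\lceil\alpha n\rceil)})$. $v_\alpha(x):=\inf\{t:P_{\theta\sim\mathbb{P}^N}(H(x;\theta)\le t)\ge\alpha\}$. Let $\mathcal{E}(x,\xi(\theta)) := h(x,\xi(\theta))-H(x;\theta)$ and $\bar{\mathcal{E}}^m(x;\theta):=\sqrt m\cdot\frac1m\sum_{j=1}^m\mathcal{E}(x,\xi_j(\theta))$. A1. (i) For all $x\in\mathcal{X}$, $\tau_\theta^2:=\mathbb{E}_{\mathbb{P}_\theta}[h(x,\xi)^2]<\infty$ for $\mathbb{P}^N$-a.e. $\theta$ and $\tau^2:=\mathbb{E}_{\theta,\mathbb{P}_\theta}[h(x,\xi)^2]<\infty$. (ii) For each $m$ and all $x\in\mathcal{X}$, the joint density $p_m(h,e)$ of $(H(x;\theta),\bar{\mathcal{E}}^m(x;\theta))$ and its partial derivatives $\partial_h p_m$, $\partial_h^2 p_m$ exist for all $(h,e)$. (iii) For all $x\in\mathcal{X}$ there are nonnegative functions $g_{0,m},g_{1,m},g_{2,m}$ with $p_m(h,e)\le g_{0,m}(e)$, $|\partial_h p_m(h,e)|\le g_{1,m}(e)$,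 $|\partial_h^2p_m(h,e)|\le g_{2,m}(e)$ for all $(h,e)$, and $\sup_m\int|e|^r g_{i,m}(e)\,de<\infty$ for $i=0,1,2$ and $0\le r\le4$. *)

theory Defs
  imports "HOL-Probability.Probability"
begin

definition Hval :: "('p \<Rightarrow> 'e measure) \<Rightarrow> (real \<Rightarrow> 'e \<Rightarrow> real) \<Rightarrow> real \<Rightarrow> 'p \<Rightarrow> real" where
  "Hval P h x \<theta> = (\<integral>\<xi>. h x \<xi> \<partial>(P \<theta>))"

definition Hhat :: "(real \<Rightarrow> 'e \<Rightarrow> real) \<Rightarrow> real \<Rightarrow> nat \<Rightarrow> (nat \<Rightarrow> 'e) \<Rightarrow> real" where
  "Hhat h x m xs = (\<Sum>j<m. h x (xs j)) / real m"

definition quantile :: "'p measure \<Rightarrow> ('p \<Rightarrow> real) \<Rightarrow> real \<Rightarrow> real" where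
  "quantile Q f \<alpha> = Inf {t. measure Q {\<theta> \<in> space Q. f \<theta> \<le> t} \<ge> \<alpha>}"

definition order_stat :: "nat \<Rightarrow> (nat \<Rightarrow> real) \<Rightarrow> nat \<Rightarrow> real" where
  "order_stat n a k = sort (map a [0..<n]) ! (k - 1)"

text \<open>Law of one block (theta_i, (xi_j(theta_i))_j): theta ~ PN, then xi_j iid ~ P theta.\<close>
definition block_law :: "'p measure \<Rightarrow> ('p \<Rightarrow> 'e::euclidean_space measure) \<Rightarrow> ('p \<times> (nat \<Rightarrow> 'e)) measure" where
  "block_law PN P = PN \<bind> (\<lambda>\<theta>. distr (PiM UNIV (\<lambda>_::nat. P \<theta>))
        (PN \<Otimes>\<^sub>M PiM UNIV (\<lambda>_::nat. (borel :: 'e measure))) (\<lambda>s. (\<theta>, s)))"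

definition sampling_space :: "'p measure \<Rightarrow> ('p \<Rightarrow> 'e::euclidean_space measure) \<Rightarrow> (nat \<Rightarrow> 'p \<times> (nat \<Rightarrow> 'e)) measure" where
  "sampling_space PN P = PiM UNIV (\<lambda>_::nat. block_law PN P)"

definition vhat :: "(real \<Rightarrow> 'e \<Rightarrow> real) \<Rightarrow> real \<Rightarrow> real \<Rightarrow> nat \<Rightarrow> nat \<Rightarrow> (nat \<Rightarrow> 'p \<times> (nat \<Rightarrow> 'e)) \<Rightarrow> real" where
  "vhat h x \<alpha> n m \<omega> = order_stat n (\<lambda>i. Hhat h x m (snd (\<omega> i))) (nat \<lceil>\<alpha> * real n\<rceil>)"

text \<open>Law of (H(x;theta), bar E^m(x;theta)) with theta ~ PN and xi_1..xi_m iid ~ P theta.\<close>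
definition err_law :: "'p measure \<Rightarrow> ('p \<Rightarrow> 'e::euclidean_space measure) \<Rightarrow> (real \<Rightarrow> 'e \<Rightarrow> real) \<Rightarrow> real \<Rightarrow> nat \<Rightarrow> (real \<times> real) measure" where
  "err_law PN P h x m = PN \<bind> (\<lambda>\<theta>. distr (PiM {..<m} (\<lambda>_. P \<theta>)) borel
      (\<lambda>s. (Hval P h x \<theta>, sqrt (real m) * ((\<Sum>j<m. (h x (s j) - Hval P h x \<theta>)) / real m))))"

definition A1 :: "real set \<Rightarrow> 'p measure \<Rightarrow> ('p \<Rightarrow> 'e::euclidean_space measure) \<Rightarrow> (real \<Rightarrow> 'e \<Rightarrow> real) \<Rightarrow> bool" where
  "A1 X PN P h \<longleftrightarrow>
    (\<forall>x\<in>X.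
      (AE \<theta> in PN. (\<integral>\<^sup>+\<xi>. ennreal ((h x \<xi>)\<^sup>2) \<partial>(P \<theta>)) < \<infinity>) \<and>
      (\<integral>\<^sup>+\<theta>. (\<integral>\<^sup>+\<xi>. ennreal ((h x \<xi>)\<^sup>2) \<partial>(P \<theta>)) \<partial>PN) < \<infinity>) \<and>
    (\<forall>x\<in>X. \<exists>(p :: nat \<Rightarrow> real \<Rightarrow> real \<Rightarrow> real) p1 p2 (g0 :: nat \<Rightarrow> real \<Rightarrow> real) g1 g2.
      (\<forall>m\<ge>1.
         err_law PN P h x m = density lborel (\<lambda>z. ennreal (p m (fst z) (snd z))) \<and>
         (\<forall>hh e. p m hh e \<ge> 0) \<and>
         (\<forall>hh e. ((\<lambda>t. p m t e) has_real_derivative p1 m hh e) (at hh)) \<and>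
         (\<forall>hh e. ((\<lambda>t. p1 m t e) has_real_derivative p2 m hh e) (at hh)) \<and>
         (\<forall>e. g0 m e \<ge> 0 \<and> g1 m e \<ge> 0 \<and> g2 m e \<ge> 0) \<and>
         (\<forall>hh e. p m hh e \<le> g0 m e \<and> \<bar>p1 m hh e\<bar> \<le> g1 m e \<and> \<bar>p2 m hh e\<bar> \<le> g2 m e)) \<and>
      (\<forall>r::real. 0 \<le> r \<and> r \<le> 4 \<longrightarrow>
         (\<Squnion>m\<in>{1..}. \<integral>\<^sup>+e. ennreal (\<bar>e\<bar> powr r * g0 m e) \<partial>lborel) < \<infinity> \<and>
         (\<Squnion>m\<in>{1..}. \<integral>\<^sup>+e. ennreal (\<bar>e\<bar> powr r * g1 m e) \<partial>lborel) < \<infinity> \<and>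
         (\<Squnion>m\<in>{1..}. \<integral>\<^sup>+e. ennreal (\<bar>e\<bar> powr r * g2 m e) \<partial>lborel) < \<infinity>))"

end

theory Submission
  imports Defs "HOL-Library.Discrete_Functions"
begin

text \<open>
  Within one block the sample means \<open>Hhat h x m\<close> converge to \<open>H(x;\<theta>)\<close> by the strong law of
  large numbers, so for every \<open>\<delta> > 0\<close> the fraction of blocks whose sample mean is still more
  than \<open>\<delta>\<close> away from its limit for some \<open>m \<ge> M\<close> tends to a quantity that vanishes as
  \<open>M \<rightarrow> \<infinity>\<close>.  Between blocks the strong law gives the empirical frequencies of
  \<open>{H \<ge> v\<^sub>\<alpha>}\<close>, \<open>{H \<ge> v\<^sub>\<alpha> - \<delta>}\<close> and of the strip \<open>{v\<^sub>\<alpha> - 3\<delta> < H < v\<^sub>\<alpha>}\<close>.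
  The order statistic \<open>vhat\<close> cannot fall below \<open>v\<^sub>\<alpha> - 2\<delta>\<close>, since then too many sample
  means would exceed it; once it lies above, a misclassified block either has a sample mean
  far from \<open>H\<close>, or has \<open>H\<close> in the strip, or lies in \<open>{H \<ge> v\<^sub>\<alpha>}\<close>, whose frequency
  exceeds that of \<open>{Hhat \<ge> vhat}\<close> by little because \<open>v\<^sub>\<alpha>\<close> carries no atom.
  The strong law itself is proved for square-integrable variables along the subsequence of
  squares (Chebyshev and Borel--Cantelli), followed by monotone interpolation.
\<close>

definition empirical_freq :: "nat \<Rightarrow> (nat \<Rightarrow> bool) \<Rightarrow> real" where
  "empirical_freq n A = (\<Sum>i<n. of_bool (A i)) / real n"

lemma empirical_freq_nonneg: "0 \<le> empirical_freq n A"
  by (simp add: empirical_freq_def sum_nonneg)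

lemma abs_of_bool_diff: "\<bar>of_bool A - of_bool B\<bar> = (of_bool (A \<noteq> B) :: real)"
  by (cases A; cases B) simp_all

subsection \<open>Independent identically distributed sequences\<close>

lemma product_prob_space_iid:
  assumes "prob_space Q"
  shows "product_prob_space (\<lambda>_::nat. Q)"
  using assms
  by (simp add: product_prob_space_def product_sigma_finite_def prob_space_imp_sigma_finite
      product_prob_space_axioms_def)

lemma indep_vars_PiM_coordinates:
  assumes Q: "prob_space Q"
  shows "prob_space.indep_vars (PiM UNIV (\<lambda>_::nat. Q)) (\<lambda>_. Q) (\<lambda>k s. s k) UNIV"
proof -
  interpret product_prob_space "\<lambda>_::nat. Q" UNIV
    using product_prob_space_iid[OF Q] by (simp add: product_prob_space_def)
  show ?thesis
  proof (subst indep_vars_iff_distr_eq_PiM)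
    have restr: "(\<lambda>x::nat\<Rightarrow>_. restrict x UNIV) = (\<lambda>x. x)"
      by (auto simp: restrict_def)
    have marg: "(\<lambda>i::nat. distr (PiM UNIV (\<lambda>_. Q)) Q (\<lambda>x. x i)) = (\<lambda>_. Q)"
      by (rule ext, rule PiM_component) simp
    show "distr (PiM UNIV (\<lambda>_. Q)) (PiM UNIV (\<lambda>_. Q)) (\<lambda>x. \<lambda>i\<in>UNIV. x i)
        = PiM UNIV (\<lambda>i::nat. distr (PiM UNIV (\<lambda>_. Q)) Q (\<lambda>x. x i))"
      unfolding restr marg by (simp add: distr_id2)
  qed auto
qed

lemma
  fixes f :: "'a \<Rightarrow> real"
  assumes Q: "prob_space Q" and f[measurable]: "f \<in> borel_measurable Q"
  shows integrable_PiM_coordinate_iff: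
      "integrable (PiM UNIV (\<lambda>_::nat. Q)) (\<lambda>s. f (s j)) \<longleftrightarrow> integrable Q f"
    and integral_PiM_coordinate:
      "(\<integral>s. f (s j) \<partial>PiM UNIV (\<lambda>_::nat. Q)) = (\<integral>x. f x \<partial>Q)"
proof -
  interpret product_prob_space "\<lambda>_::nat. Q" UNIV
    using product_prob_space_iid[OF Q] by (simp add: product_prob_space_def)
  have marg: "distr (PiM UNIV (\<lambda>_::nat. Q)) Q (\<lambda>s. s j) = Q"
    by (rule PiM_component) simp
  show "integrable (PiM UNIV (\<lambda>_::nat. Q)) (\<lambda>s. f (s j)) \<longleftrightarrow> integrable Q f"
    using integrable_distr_eq[of "\<lambda>s. s j" "PiM UNIV (\<lambda>_::nat. Q)" Q f] marg by simp
  show "(\<integral>s. f (s j) \<partial>PiM UNIV (\<lambda>_::nat. Q)) = (\<integral>x. f x \<partial>Q)"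
    using integral_distr[of "\<lambda>s. s j" "PiM UNIV (\<lambda>_::nat. Q)" Q f] marg by simp
qed

lemma
  fixes g :: "'a \<Rightarrow> real"
  assumes Q: "prob_space Q" and g[measurable]: "g \<in> borel_measurable Q"
    and int: "integrable Q g" and "i \<noteq> j"
  shows integrable_PiM_coordinate_product:
      "integrable (PiM UNIV (\<lambda>_::nat. Q)) (\<lambda>s. g (s i) * g (s j))"
    and integral_PiM_coordinate_product:
      "(\<integral>s. g (s i) * g (s j) \<partial>PiM UNIV (\<lambda>_::nat. Q)) = (\<integral>x. g x \<partial>Q) * (\<integral>x. g x \<partial>Q)"
proof -
  interpret product_prob_space "\<lambda>_::nat. Q" UNIV
    using product_prob_space_iid[OF Q] by (simp add: product_prob_space_def)
  have "indep_vars (\<lambda>_. borel) (\<lambda>k s. g (s k)) (UNIV::nat set)"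
    by (rule indep_vars_compose2[OF indep_vars_PiM_coordinates[OF Q]]) simp
  then have ind: "indep_vars (\<lambda>_. borel) (\<lambda>k s. g (s k)) {i, j}"
    by (rule indep_vars_subset) simp
  have coord: "\<And>k. integrable (PiM UNIV (\<lambda>_::nat. Q)) (\<lambda>s. g (s k))"
    using integrable_PiM_coordinate_iff[OF Q g] int by simp
  have prod: "\<And>s. (\<Prod>k\<in>{i,j}. g (s k)) = g (s i) * g (s j)"
    using \<open>i \<noteq> j\<close> by simp
  show "integrable (PiM UNIV (\<lambda>_::nat. Q)) (\<lambda>s. g (s i) * g (s j))"
    using indep_vars_integrable[OF _ ind] coord by (simp add: prod)
  have "(\<integral>s. (\<Prod>k\<in>{i,j}. g (s k)) \<partial>PiM UNIV (\<lambda>_::nat. Q))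
      = (\<Prod>k\<in>{i,j}. \<integral>s. g (s k) \<partial>PiM UNIV (\<lambda>_::nat. Q))"
    using indep_vars_lebesgue_integral[OF _ ind] coord by simp
  then show "(\<integral>s. g (s i) * g (s j) \<partial>PiM UNIV (\<lambda>_::nat. Q)) = (\<integral>x. g x \<partial>Q) * (\<integral>x. g x \<partial>Q)"
    using \<open>i \<noteq> j\<close> integral_PiM_coordinate[OF Q g] by (simp add: prod)
qed

lemma
  fixes g :: "'a \<Rightarrow> real"
  assumes Q: "prob_space Q" and g[measurable]: "g \<in> borel_measurable Q"
    and sq: "integrable Q (\<lambda>x. (g x)\<^sup>2)" and mean0: "(\<integral>x. g x \<partial>Q) = 0"
  shows integrable_PiM_sum_square:
      "integrable (PiM UNIV (\<lambda>_::nat. Q)) (\<lambda>s. (\<Sum>j<m. g (s j))\<^sup>2)"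
    and integral_PiM_sum_square:
      "(\<integral>s. (\<Sum>j<m. g (s j))\<^sup>2 \<partial>PiM UNIV (\<lambda>_::nat. Q)) = real m * (\<integral>x. (g x)\<^sup>2 \<partial>Q)"
proof -
  interpret Q: prob_space Q by (rule Q)
  have int: "integrable Q g"
    using Q.square_integrable_imp_integrable[OF g sq] .
  have expand: "\<And>s. (\<Sum>j<m. g (s j))\<^sup>2 = (\<Sum>i<m. \<Sum>j<m. g (s i) * g (s j))"
    by (simp add: power2_eq_square sum_product)
  have diag: "(\<lambda>s. g (s i) * g (s i)) = (\<lambda>s. (\<lambda>x. (g x)\<^sup>2) (s i))" for i
    by (simp add: power2_eq_square)
  have integrable_ij: "integrable (PiM UNIV (\<lambda>_::nat. Q)) (\<lambda>s. g (s i) * g (s j))" for i j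
    using integrable_PiM_coordinate_iff[OF Q, of "\<lambda>x. (g x)\<^sup>2" i] sq
      integrable_PiM_coordinate_product[OF Q g int, of i j]
    by (cases "i = j") (simp_all add: diag)
  have integral_ij: "(\<integral>s. g (s i) * g (s j) \<partial>PiM UNIV (\<lambda>_::nat. Q))
      = (if i = j then (\<integral>x. (g x)\<^sup>2 \<partial>Q) else 0)" for i j
    using integral_PiM_coordinate[OF Q, of "\<lambda>x. (g x)\<^sup>2" i]
      integral_PiM_coordinate_product[OF Q g int, of i j] mean0
    by (cases "i = j") (simp_all add: diag)
  show "integrable (PiM UNIV (\<lambda>_::nat. Q)) (\<lambda>s. (\<Sum>j<m. g (s j))\<^sup>2)"
    unfolding expand using integrable_ij by auto
  show "(\<integral>s. (\<Sum>j<m. g (s j))\<^sup>2 \<partial>PiM UNIV (\<lambda>_::nat. Q)) = real m * (\<integral>x. (g x)\<^sup>2 \<partial>Q)"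
    unfolding expand using integrable_ij by (simp add: integral_sum integral_ij)
qed

subsection \<open>The strong law of large numbers for square-integrable variables\<close>

lemma filterlim_floor_sqrt_at_top: "filterlim floor_sqrt at_top sequentially"
  unfolding filterlim_at_top eventually_sequentially
  by (auto intro!: exI[of _ "_\<^sup>2"] le_floor_sqrtI)

text \<open>For nonnegative terms the partial sums are monotone, so convergence of the averages
  along the squares \<open>k\<^sup>2 \<le> m < (k + 1)\<^sup>2\<close> forces convergence of all averages, because
  \<open>(k + 1)\<^sup>2 / k\<^sup>2 \<rightarrow> 1\<close>.\<close>
lemma averages_tendsto_of_square_averages_tendsto:
  fixes a :: "nat \<Rightarrow> real"
  assumes nonneg: "\<And>j. 0 \<le> a j"
    and squares: "(\<lambda>k. (\<Sum>j<k\<^sup>2. a j) / real (k\<^sup>2)) \<longlonglongrightarrow> \<mu>"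
  shows "(\<lambda>m. (\<Sum>j<m. a j) / real m) \<longlonglongrightarrow> \<mu>"
proof -
  define S where "S n = (\<Sum>j<n. a j)" for n
  have S_mono: "S p \<le> S q" if "p \<le> q" for p q
    unfolding S_def using that nonneg by (intro sum_mono2) auto
  have S_nonneg: "0 \<le> S n" for n
    unfolding S_def using nonneg by (simp add: sum_nonneg)
  define L where "L k = (S (k\<^sup>2) / real (k\<^sup>2)) * (real k / real (Suc k))\<^sup>2" for k
  define U where "U k = (S ((Suc k)\<^sup>2) / real ((Suc k)\<^sup>2)) * (real (Suc k) / real k)\<^sup>2" for k
  have "L \<longlonglongrightarrow> \<mu> * 1\<^sup>2"
    unfolding L_def using squares
    by (intro tendsto_mult tendsto_power LIMSEQ_n_over_Suc_n) (simp add: S_def)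
  then have L: "(\<lambda>m. L (floor_sqrt m)) \<longlonglongrightarrow> \<mu>"
    by (intro filterlim_compose[OF _ filterlim_floor_sqrt_at_top]) simp
  have "U \<longlonglongrightarrow> \<mu> * 1\<^sup>2"
    unfolding U_def using LIMSEQ_Suc[OF squares]
    by (intro tendsto_mult tendsto_power LIMSEQ_Suc_n_over_n) (simp add: S_def)
  then have U: "(\<lambda>m. U (floor_sqrt m)) \<longlonglongrightarrow> \<mu>"
    by (intro filterlim_compose[OF _ filterlim_floor_sqrt_at_top]) simp
  have "L (floor_sqrt m) \<le> S m / real m \<and> S m / real m \<le> U (floor_sqrt m)" if "1 \<le> m" for m
  proof -
    define t where "t = floor_sqrt m"
    have t: "1 \<le> t" "t\<^sup>2 \<le> m" "m < (Suc t)\<^sup>2"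
      using that Suc_floor_sqrt_power2_gt[of m] by (simp_all add: t_def Suc_le_eq)
    have m_bounds: "real (t\<^sup>2) \<le> real m" "real m \<le> real ((Suc t)\<^sup>2)"
      using t(2,3) by linarith+
    have "L t = S (t\<^sup>2) / real ((Suc t)\<^sup>2)"
      unfolding L_def using t(1) by (simp add: power_divide field_simps)
    also have "\<dots> \<le> S m / real m"
      using S_mono[OF t(2)] m_bounds that S_nonneg[of m] by (intro frac_le) auto
    finally have lower: "L t \<le> S m / real m" .
    have "S m / real m \<le> S ((Suc t)\<^sup>2) / real (t\<^sup>2)"
      using S_mono[of m "(Suc t)\<^sup>2"] t(1,3) m_bounds S_nonneg[of "(Suc t)\<^sup>2"]
      by (intro frac_le) auto
    also have "\<dots> = U t"
      unfolding U_def using t(1) by (simp add: power_divide field_simps)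
    finally show ?thesis using lower by (simp add: t_def)
  qed
  then have "eventually (\<lambda>m. L (floor_sqrt m) \<le> S m / real m \<and> S m / real m \<le> U (floor_sqrt m))
      sequentially"
    by (auto simp: eventually_sequentially)
  then have "(\<lambda>m. S m / real m) \<longlonglongrightarrow> \<mu>"
    by (intro tendsto_sandwich[OF _ _ L U]) (auto elim: eventually_mono)
  then show ?thesis unfolding S_def .
qed

lemma AE_PiM_eventually_square_average_less:
  fixes g :: "'a \<Rightarrow> real"
  assumes Q: "prob_space Q" and g[measurable]: "g \<in> borel_measurable Q"
    and sq: "integrable Q (\<lambda>x. (g x)\<^sup>2)" and mean0: "(\<integral>x. g x \<partial>Q) = 0" and e: "0 < e"
  shows "AE s in PiM UNIV (\<lambda>_::nat. Q).
    eventually (\<lambda>k. \<bar>(\<Sum>j<k\<^sup>2. g (s j)) / real (k\<^sup>2)\<bar> < e) sequentially"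
proof -
  interpret product_prob_space "\<lambda>_::nat. Q" UNIV
    using product_prob_space_iid[OF Q] by (simp add: product_prob_space_def)
  let ?\<Omega> = "PiM UNIV (\<lambda>_::nat. Q)"
  define V where "V = (\<integral>x. (g x)\<^sup>2 \<partial>Q)"
  define A where "A k = {s\<in>space ?\<Omega>. e * real ((Suc k)\<^sup>2) \<le> \<bar>\<Sum>j<(Suc k)\<^sup>2. g (s j)\<bar>}" for k
  have [measurable]: "A k \<in> sets ?\<Omega>" for k
    unfolding A_def by measurable
  have chebyshev: "measure ?\<Omega> (A k) \<le> V / e\<^sup>2 * inverse (real (Suc k) ^ 2)" for k
  proof -
    have "measure ?\<Omega> (A k) \<le> (\<integral>s. (\<Sum>j<(Suc k)\<^sup>2. g (s j))\<^sup>2 \<partial>?\<Omega>) / (e * real ((Suc k)\<^sup>2))\<^sup>2"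
      unfolding A_def using e
      by (intro second_moment_method integrable_PiM_sum_square[OF Q g sq mean0]) simp_all
    also have "\<dots> = real ((Suc k)\<^sup>2) * V / (e * real ((Suc k)\<^sup>2))\<^sup>2"
      using integral_PiM_sum_square[OF Q g sq mean0] by (simp add: V_def)
    also have "\<dots> = V / e\<^sup>2 * inverse (real (Suc k) ^ 2)"
    proof -
      have "n * V / (e * n)\<^sup>2 = V / e\<^sup>2 * inverse n" if "n > 0" for n :: real
        using that e by (simp add: field_simps power2_eq_square)
      from this[of "real ((Suc k)\<^sup>2)"] show ?thesis by simp
    qed
    finally show ?thesis .
  qed
  have "summable (\<lambda>k. V / e\<^sup>2 * inverse (real (Suc k) ^ 2))"
    by (rule summable_mult, subst summable_Suc_iff) (rule inverse_power_summable, simp)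
  then have "summable (\<lambda>k. measure ?\<Omega> (A k))"
    by (rule summable_comparison_test'[of _ 0]) (use chebyshev in simp)
  then have "AE s in ?\<Omega>. eventually (\<lambda>k. s \<in> space ?\<Omega> - A k) sequentially"
    by (intro borel_cantelli_AE1) (auto simp: P.emeasure_eq_measure)
  then show ?thesis
  proof (rule eventually_mono)
    fix s assume "eventually (\<lambda>k. s \<in> space ?\<Omega> - A k) sequentially"
    then have "eventually (\<lambda>k. \<bar>(\<Sum>j<(Suc k)\<^sup>2. g (s j)) / real ((Suc k)\<^sup>2)\<bar> < e) sequentially"
      by (rule eventually_mono)
        (auto simp: A_def divide_less_eq not_le simp del: of_nat_Suc of_nat_power)
    then show "eventually (\<lambda>k. \<bar>(\<Sum>j<k\<^sup>2. g (s j)) / real (k\<^sup>2)\<bar> < e) sequentially"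
      by (subst eventually_sequentially_Suc[symmetric])
  qed
qed

lemma AE_PiM_square_averages_tendsto_zero:
  fixes g :: "'a \<Rightarrow> real"
  assumes Q: "prob_space Q" and g[measurable]: "g \<in> borel_measurable Q"
    and sq: "integrable Q (\<lambda>x. (g x)\<^sup>2)" and mean0: "(\<integral>x. g x \<partial>Q) = 0"
  shows "AE s in PiM UNIV (\<lambda>_::nat. Q). (\<lambda>k. (\<Sum>j<k\<^sup>2. g (s j)) / real (k\<^sup>2)) \<longlonglongrightarrow> 0"
proof -
  let ?\<Omega> = "PiM UNIV (\<lambda>_::nat. Q)"
  have "AE s in ?\<Omega>. \<forall>l::nat. eventually
      (\<lambda>k. \<bar>(\<Sum>j<k\<^sup>2. g (s j)) / real (k\<^sup>2)\<bar> < inverse (real (Suc l))) sequentially"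
    using AE_PiM_eventually_square_average_less[OF Q g sq mean0] by (subst AE_all_countable) simp
  then show ?thesis
  proof (rule eventually_mono)
    fix s assume small: "\<forall>l::nat. eventually
      (\<lambda>k. \<bar>(\<Sum>j<k\<^sup>2. g (s j)) / real (k\<^sup>2)\<bar> < inverse (real (Suc l))) sequentially"
    show "(\<lambda>k. (\<Sum>j<k\<^sup>2. g (s j)) / real (k\<^sup>2)) \<longlonglongrightarrow> 0"
    proof (rule tendstoI)
      fix r :: real assume "r > 0"
      then obtain l where l: "inverse (real (Suc l)) < r"
        using ex_inverse_of_nat_less by (metis Suc_pred)
      show "eventually (\<lambda>k. dist ((\<Sum>j<k\<^sup>2. g (s j)) / real (k\<^sup>2)) 0 < r) sequentially"
        using small[rule_format, of l] by (rule eventually_mono) (use l in simp)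
    qed
  qed
qed

lemma strong_law_of_large_numbers_nonneg:
  fixes g :: "'a \<Rightarrow> real"
  assumes Q: "prob_space Q" and g[measurable]: "g \<in> borel_measurable Q"
    and sq: "integrable Q (\<lambda>x. (g x)\<^sup>2)" and nonneg: "\<And>x. 0 \<le> g x"
  shows "AE s in PiM UNIV (\<lambda>_::nat. Q). (\<lambda>m. (\<Sum>j<m. g (s j)) / real m) \<longlonglongrightarrow> (\<integral>x. g x \<partial>Q)"
proof -
  interpret Q: prob_space Q by (rule Q)
  define \<mu> where "\<mu> = (\<integral>x. g x \<partial>Q)"
  have int: "integrable Q g"
    using Q.square_integrable_imp_integrable[OF g sq] .
  have "AE s in PiM UNIV (\<lambda>_::nat. Q). (\<lambda>k. (\<Sum>j<k\<^sup>2. g (s j) - \<mu>) / real (k\<^sup>2)) \<longlonglongrightarrow> 0"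
    using sq int by (intro AE_PiM_square_averages_tendsto_zero[OF Q])
      (simp_all add: power2_diff \<mu>_def Q.prob_space)
  then show ?thesis
    unfolding \<mu>_def[symmetric]
  proof (rule eventually_mono)
    fix s assume centred: "(\<lambda>k. (\<Sum>j<k\<^sup>2. g (s j) - \<mu>) / real (k\<^sup>2)) \<longlonglongrightarrow> 0"
    have "eventually (\<lambda>k. (\<Sum>j<k\<^sup>2. g (s j) - \<mu>) / real (k\<^sup>2) + \<mu>
        = (\<Sum>j<k\<^sup>2. g (s j)) / real (k\<^sup>2)) sequentially"
      by (rule eventually_sequentiallyI[of 1]) (auto simp: sum_subtractf field_simps)
    moreover have "(\<lambda>k. (\<Sum>j<k\<^sup>2. g (s j) - \<mu>) / real (k\<^sup>2) + \<mu>) \<longlonglongrightarrow> 0 + \<mu>"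
      by (intro tendsto_add centred tendsto_const)
    ultimately have "(\<lambda>k. (\<Sum>j<k\<^sup>2. g (s j)) / real (k\<^sup>2)) \<longlonglongrightarrow> \<mu>"
      using tendsto_cong by fastforce
    then show "(\<lambda>m. (\<Sum>j<m. g (s j)) / real m) \<longlonglongrightarrow> \<mu>"
      by (rule averages_tendsto_of_square_averages_tendsto[OF nonneg])
  qed
qed

lemma strong_law_of_large_numbers:
  fixes g :: "'a \<Rightarrow> real"
  assumes Q: "prob_space Q" and g[measurable]: "g \<in> borel_measurable Q"
    and sq: "integrable Q (\<lambda>x. (g x)\<^sup>2)"
  shows "AE s in PiM UNIV (\<lambda>_::nat. Q). (\<lambda>m. (\<Sum>j<m. g (s j)) / real m) \<longlonglongrightarrow> (\<integral>x. g x \<partial>Q)"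
proof -
  interpret Q: prob_space Q by (rule Q)
  define gp where "gp x = max (g x) 0" for x
  define gn where "gn x = max (- g x) 0" for x
  have [measurable]: "gp \<in> borel_measurable Q" "gn \<in> borel_measurable Q"
    unfolding gp_def gn_def by measurable
  have sq_parts: "integrable Q (\<lambda>x. (gp x)\<^sup>2)" "integrable Q (\<lambda>x. (gn x)\<^sup>2)"
    by (intro Bochner_Integration.integrable_bound[OF sq] AE_I2; simp add: gp_def gn_def max_def)+
  have int_parts: "integrable Q gp" "integrable Q gn"
    using Q.square_integrable_imp_integrable[OF _ sq_parts(1)]
      Q.square_integrable_imp_integrable[OF _ sq_parts(2)] by simp_all
  have split: "g x = gp x - gn x" for x
    by (simp add: gp_def gn_def max_def)
  have "AE s in PiM UNIV (\<lambda>_::nat. Q). (\<lambda>m. (\<Sum>j<m. gp (s j)) / real m) \<longlonglongrightarrow> (\<integral>x. gp x \<partial>Q)"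
    by (rule strong_law_of_large_numbers_nonneg[OF Q _ sq_parts(1)]) (auto simp: gp_def)
  moreover have "AE s in PiM UNIV (\<lambda>_::nat. Q). (\<lambda>m. (\<Sum>j<m. gn (s j)) / real m) \<longlonglongrightarrow> (\<integral>x. gn x \<partial>Q)"
    by (rule strong_law_of_large_numbers_nonneg[OF Q _ sq_parts(2)]) (auto simp: gn_def)
  ultimately show ?thesis
  proof eventually_elim
    case (elim s)
    then have "(\<lambda>m. (\<Sum>j<m. gp (s j)) / real m - (\<Sum>j<m. gn (s j)) / real m)
        \<longlonglongrightarrow> (\<integral>x. gp x \<partial>Q) - (\<integral>x. gn x \<partial>Q)"
      by (intro tendsto_diff)
    then show ?case
      using int_parts by (simp add: split sum_subtractf diff_divide_distrib)
  qed
qed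

lemma strong_law_empirical_freq:
  assumes Q: "prob_space Q" and [measurable]: "Measurable.pred Q A"
  shows "AE s in PiM UNIV (\<lambda>_::nat. Q).
    (\<lambda>n. empirical_freq n (\<lambda>i. A (s i))) \<longlonglongrightarrow> measure Q {x\<in>space Q. A x}"
proof -
  interpret Q: prob_space Q by (rule Q)
  have "integrable Q (\<lambda>x. (of_bool (A x) :: real)\<^sup>2)"
    by (rule Q.integrable_const_bound[where B=1]) auto
  then have "AE s in PiM UNIV (\<lambda>_::nat. Q).
      (\<lambda>n. empirical_freq n (\<lambda>i. A (s i))) \<longlonglongrightarrow> (\<integral>x. of_bool (A x) \<partial>Q)"
    unfolding empirical_freq_def by (intro strong_law_of_large_numbers[OF Q]) simp_all
  moreover have "(\<integral>x. of_bool (A x) \<partial>Q) = measure Q {x\<in>space Q. A x}"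
    by (subst Bochner_Integration.integral_cong[of Q Q _ "indicator {x\<in>space Q. A x}"])
      (auto simp: indicator_def)
  ultimately show ?thesis by simp
qed

subsection \<open>Order statistics and misclassified blocks\<close>

lemma sum_of_bool_eq_card_sort:
  "(\<Sum>i<n. of_bool (A (a i)) :: real) = real (card {j. j < n \<and> A (sort (map a [0..<n]) ! j)})"
proof -
  have "(\<Sum>i<n. of_bool (A (a i)) :: real) = real (card ({..<n} \<inter> {i. A (a i)}))"
    by (simp add: sum_of_bool_eq)
  also have "card ({..<n} \<inter> {i. A (a i)}) = length (filter A (map a [0..<n]))"
    by (simp add: length_filter_conv_card Int_def conj_commute cong: conj_cong)
  also have "\<dots> = length (filter A (sort (map a [0..<n])))"
    by (metis mset_filter mset_sort size_mset)
  also have "\<dots> = card {j. j < n \<and> A (sort (map a [0..<n]) ! j)}"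
    by (simp add: length_filter_conv_card)
  finally show ?thesis .
qed

lemma order_stat_count_ge:
  assumes "1 \<le> K" "K \<le> n"
  shows "real n - real K + 1 \<le> (\<Sum>i<n. of_bool (order_stat n a K \<le> a i))"
proof -
  define xs where "xs = sort (map a [0..<n])"
  have "{K - 1..<n} \<subseteq> {j. j < n \<and> xs ! (K - 1) \<le> xs ! j}"
    using assms by (auto simp: xs_def intro: sorted_nth_mono)
  then have "card {K - 1..<n} \<le> card {j. j < n \<and> xs ! (K - 1) \<le> xs ! j}"
    by (intro card_mono) auto
  then show ?thesis
    using assms by (simp add: sum_of_bool_eq_card_sort order_stat_def xs_def)
qed

lemma order_stat_count_gt:
  assumes "1 \<le> K" "K \<le> n"
  shows "(\<Sum>i<n. of_bool (order_stat n a K < a i)) \<le> real n - real K"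
proof -
  define xs where "xs = sort (map a [0..<n])"
  have sorted: "xs ! j \<le> xs ! (K - 1)" if "j \<le> K - 1" for j
    using assms that by (auto simp: xs_def intro: sorted_nth_mono)
  have "{j. j < n \<and> xs ! (K - 1) < xs ! j} \<subseteq> {K..<n}"
  proof
    fix j assume j: "j \<in> {j. j < n \<and> xs ! (K - 1) < xs ! j}"
    then have "\<not> j \<le> K - 1"
      using sorted[of j] by auto
    then show "j \<in> {K..<n}"
      using j assms by auto
  qed
  then have "card {j. j < n \<and> xs ! (K - 1) < xs ! j} \<le> card {K..<n}"
    by (intro card_mono) auto
  then show ?thesis
    using assms by (simp add: sum_of_bool_eq_card_sort order_stat_def xs_def)
qed

lemma ceiling_rank_bounds:
  fixes \<alpha> :: real
  assumes "0 < \<alpha>" "\<alpha> < 1" "1 \<le> n"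
  shows "1 \<le> nat \<lceil>\<alpha> * real n\<rceil>" "nat \<lceil>\<alpha> * real n\<rceil> \<le> n"
    "\<alpha> * real n \<le> real (nat \<lceil>\<alpha> * real n\<rceil>)" "real (nat \<lceil>\<alpha> * real n\<rceil>) \<le> \<alpha> * real n + 1"
proof -
  have "0 < \<alpha> * real n" "\<alpha> * real n \<le> real n"
    using assms by simp_all
  then show "1 \<le> nat \<lceil>\<alpha> * real n\<rceil>" "\<alpha> * real n \<le> real (nat \<lceil>\<alpha> * real n\<rceil>)"
    "real (nat \<lceil>\<alpha> * real n\<rceil>) \<le> \<alpha> * real n + 1" "nat \<lceil>\<alpha> * real n\<rceil> \<le> n"
    by (linarith, linarith, linarith, metis ceiling_mono ceiling_of_nat nat_int nat_mono)
qed

text \<open>Either the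
  empirical \<open>\<alpha>\<close>-quantile is at least \<open>v - 2\<delta>\<close>, and then a misclassified block is bad, lies in the
  strip below \<open>v\<close>, or is counted in \<open>{H \<ge> v}\<close> but not in \<open>{a \<ge> vhat}\<close>; or it is smaller,
  and then at most a fraction \<open>1 - \<alpha>\<close> of the blocks can have \<open>H \<ge> v - \<delta>\<close> without being bad.\<close>
lemma misclassified_freq_bound:
  fixes a H :: "nat \<Rightarrow> real"
  assumes \<alpha>: "0 < \<alpha>" "\<alpha> < 1" and n: "1 \<le> n"
    and bad: "\<forall>i. \<delta> \<le> \<bar>a i - H i\<bar> \<longrightarrow> B i"
  shows "empirical_freq n (\<lambda>i. (order_stat n a (nat \<lceil>\<alpha> * real n\<rceil>) \<le> a i) \<noteq> (v \<le> H i))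
      \<le> empirical_freq n (\<lambda>i. v \<le> H i) - (1 - \<alpha>) + 2 * empirical_freq n B
        + 2 * empirical_freq n (\<lambda>i. v - 3 * \<delta> < H i \<and> H i < v)
    \<or> empirical_freq n (\<lambda>i. v - \<delta> \<le> H i) - empirical_freq n B \<le> 1 - \<alpha>"
proof -
  define vh where "vh = order_stat n a (nat \<lceil>\<alpha> * real n\<rceil>)"
  define K where "K = nat \<lceil>\<alpha> * real n\<rceil>"
  note K = ceiling_rank_bounds[OF \<alpha> n, folded K_def]
  have sum_eq: "(\<Sum>i<n. of_bool (A i)) = real n * empirical_freq n A" for A
    using n by (simp add: empirical_freq_def)
  consider "v - 2 * \<delta> \<le> vh" | "vh < v - 2 * \<delta>"
    by linarith
  then show ?thesis
  proof cases
    case 1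
    have "(\<Sum>i<n. of_bool ((vh \<le> a i) \<noteq> (v \<le> H i)))
        \<le> (\<Sum>i<n. of_bool (v \<le> H i) - of_bool (vh \<le> a i)
          + 2 * (of_bool (B i) + of_bool (v - 3 * \<delta> < H i \<and> H i < v)) :: real)"
      using 1 bad[rule_format] by (intro sum_mono) (fastforce split: if_splits)
    also have "\<dots> = (\<Sum>i<n. of_bool (v \<le> H i)) - (\<Sum>i<n. of_bool (vh \<le> a i))
        + 2 * (\<Sum>i<n. of_bool (B i)) + 2 * (\<Sum>i<n. of_bool (v - 3 * \<delta> < H i \<and> H i < v))"
      by (simp add: sum.distrib sum_subtractf sum_distrib_left)
    finally have "(\<Sum>i<n. of_bool ((vh \<le> a i) \<noteq> (v \<le> H i))) \<le> \<dots>" .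
    moreover have "real n - real K + 1 \<le> (\<Sum>i<n. of_bool (vh \<le> a i))"
      unfolding vh_def K_def[symmetric] by (rule order_stat_count_ge[OF K(1,2)])
    ultimately have "real n * empirical_freq n (\<lambda>i. (vh \<le> a i) \<noteq> (v \<le> H i))
        \<le> real n * (empirical_freq n (\<lambda>i. v \<le> H i) - (1 - \<alpha>) + 2 * empirical_freq n B
          + 2 * empirical_freq n (\<lambda>i. v - 3 * \<delta> < H i \<and> H i < v))"
      using K(4) by (simp add: sum_eq algebra_simps)
    then show ?thesis
      using n by (simp add: vh_def)
  next
    case 2
    have "(\<Sum>i<n. of_bool (v - \<delta> \<le> H i)) - (\<Sum>i<n. of_bool (B i))
        = (\<Sum>i<n. of_bool (v - \<delta> \<le> H i) - of_bool (B i) :: real)"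
      by (simp add: sum_subtractf)
    also have "\<dots> \<le> (\<Sum>i<n. of_bool (vh < a i))"
      using 2 bad[rule_format] by (intro sum_mono) (fastforce split: if_splits)
    also have "\<dots> \<le> real n - real K"
      unfolding vh_def K_def[symmetric] by (rule order_stat_count_gt[OF K(1,2)])
    finally have "real n * (empirical_freq n (\<lambda>i. v - \<delta> \<le> H i) - empirical_freq n B)
        \<le> real n * (1 - \<alpha>)"
      using K(3) by (simp add: sum_eq algebra_simps)
    then show ?thesis
      using n by simp
  qed
qed

text \<open>\<open>a m i\<close> is the \<open>m\<close>-sample mean of block \<open>i\<close> and \<open>H i\<close> its limit; \<open>d\<close> indexes countably
  many tolerances so that all the hypotheses can hold simultaneously almost surely.\<close>
lemma misclassified_freq_tendsto_zero:
  fixes a :: "nat \<Rightarrow> nat \<Rightarrow> real" and H d :: "nat \<Rightarrow> real"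
  assumes \<alpha>: "0 < \<alpha>" "\<alpha> < 1"
    and L0: "(\<lambda>n. empirical_freq n (\<lambda>i. v \<le> H i)) \<longlonglongrightarrow> p0" and p0: "p0 \<le> 1 - \<alpha>"
    and L1: "\<And>k. (\<lambda>n. empirical_freq n (\<lambda>i. v - d k \<le> H i)) \<longlonglongrightarrow> p1 k"
    and p1: "\<And>k. 1 - \<alpha> < p1 k"
    and L2: "\<And>k. (\<lambda>n. empirical_freq n (\<lambda>i. v - 3 * d k < H i \<and> H i < v)) \<longlonglongrightarrow> p2 k"
    and p2: "p2 \<longlonglongrightarrow> 0"
    and LD: "\<And>k M. (\<lambda>n. empirical_freq n (\<lambda>i. \<exists>m\<ge>M. d k \<le> \<bar>a m i - H i\<bar>)) \<longlonglongrightarrow> q k M"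
    and q: "\<And>k. (\<lambda>M. q k M) \<longlonglongrightarrow> 0"
  shows "((\<lambda>(n, m). (\<Sum>i<n. \<bar>of_bool (order_stat n (a m) (nat \<lceil>\<alpha> * real n\<rceil>) \<le> a m i)
      - of_bool (v \<le> H i)\<bar>) / real n) \<longlongrightarrow> 0) (sequentially \<times>\<^sub>F sequentially)"
    (is "(?misclassified \<longlongrightarrow> 0) _")
proof (rule tendstoI)
  fix \<epsilon> :: real assume \<epsilon>: "0 < \<epsilon>"
  obtain k where k: "p2 k < \<epsilon> / 8"
    using order_tendstoD(2)[OF p2, of "\<epsilon> / 8"] \<epsilon> by (auto simp: eventually_sequentially)
  define \<gamma> where "\<gamma> = p1 k - (1 - \<alpha>)"
  have \<gamma>: "0 < \<gamma>"
    using p1[of k] by (simp add: \<gamma>_def)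
  obtain M where M: "q k M < min (\<epsilon> / 8) (\<gamma> / 4)"
    using order_tendstoD(2)[OF q, of "min (\<epsilon> / 8) (\<gamma> / 4)"] \<epsilon> \<gamma>
    by (auto simp: eventually_sequentially)
  define bad where "bad i \<longleftrightarrow> (\<exists>m\<ge>M. d k \<le> \<bar>a m i - H i\<bar>)" for i
  define good where "good n \<longleftrightarrow> 1 \<le> n \<and> empirical_freq n (\<lambda>i. v \<le> H i) < p0 + \<epsilon> / 8
      \<and> p1 k - \<gamma> / 4 < empirical_freq n (\<lambda>i. v - d k \<le> H i)
      \<and> empirical_freq n (\<lambda>i. v - 3 * d k < H i \<and> H i < v) < \<epsilon> / 8
      \<and> empirical_freq n bad < min (\<epsilon> / 8) (\<gamma> / 4)" for n
  have "eventually good sequentially"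
    unfolding good_def bad_def using \<epsilon> \<gamma> k M
    by (intro eventually_conj eventually_ge_at_top order_tendstoD[OF L0] order_tendstoD[OF L1]
        order_tendstoD[OF L2] order_tendstoD[OF LD]) auto
  then obtain N where N: "\<And>n. N \<le> n \<Longrightarrow> good n"
    by (auto simp: eventually_sequentially)
  show "eventually (\<lambda>nm. dist (?misclassified nm) 0 < \<epsilon>) (sequentially \<times>\<^sub>F sequentially)"
    unfolding eventually_prod_sequentially
  proof (intro exI[of _ "max N M"] allI impI)
    fix m n :: nat assume "max N M \<le> m" "max N M \<le> n"
    then have "N \<le> n" and bad_if_far: "\<forall>i. d k \<le> \<bar>a m i - H i\<bar> \<longrightarrow> bad i"
      by (auto simp: bad_def)
    note freqs = N[OF \<open>N \<le> n\<close>, unfolded good_def min_less_iff_conj]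
    then have "1 \<le> n" by simp
    define vh where "vh = order_stat n (a m) (nat \<lceil>\<alpha> * real n\<rceil>)"
    have "empirical_freq n (\<lambda>i. (vh \<le> a m i) \<noteq> (v \<le> H i)) < \<epsilon>"
      using misclassified_freq_bound[where a="a m" and H=H and B=bad and \<delta>="d k" and v=v,
          OF \<alpha> \<open>1 \<le> n\<close> bad_if_far, folded vh_def]
    proof (elim disjE)
      assume "empirical_freq n (\<lambda>i. (vh \<le> a m i) \<noteq> (v \<le> H i))
        \<le> empirical_freq n (\<lambda>i. v \<le> H i) - (1 - \<alpha>) + 2 * empirical_freq n bad
          + 2 * empirical_freq n (\<lambda>i. v - 3 * d k < H i \<and> H i < v)"
      then show ?thesis
        using freqs p0 \<epsilon> by (elim conjE) linarith
    next
      assume "empirical_freq n (\<lambda>i. v - d k \<le> H i) - empirical_freq n bad \<le> 1 - \<alpha>"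
      then show ?thesis
        using freqs \<gamma> \<gamma>_def by (elim conjE) linarith
    qed
    then show "dist (?misclassified (n, m)) 0 < \<epsilon>"
      using empirical_freq_nonneg
      by (simp add: dist_real_def empirical_freq_def abs_of_bool_diff vh_def)
  qed
qed

subsection \<open>Quantiles\<close>

lemma quantile_eq_cdf:
  assumes "prob_space Q" and [measurable]: "f \<in> borel_measurable Q"
  shows "quantile Q f \<alpha> = Inf {t. \<alpha> \<le> cdf (distr Q borel f) t}"
proof -
  have "measure Q {\<theta>\<in>space Q. f \<theta> \<le> t} = cdf (distr Q borel f) t" for t
    unfolding cdf_def by (subst measure_distr) (auto intro!: arg_cong2[where f=measure])
  then show ?thesis
    by (simp add: quantile_def)
qed

lemma
  fixes D :: "real measure"
  assumes "real_distribution D" and \<alpha>: "0 < \<alpha>" "\<alpha> < 1"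
  defines "v \<equiv> Inf {t. \<alpha> \<le> cdf D t}"
  shows cdf_generalized_inverse_ge: "\<alpha> \<le> cdf D v"
    and cdf_less_below_generalized_inverse: "t < v \<Longrightarrow> cdf D t < \<alpha>"
proof -
  interpret real_distribution D by fact
  define S where "S = {t. \<alpha> \<le> cdf D t}"
  obtain t0 where "\<alpha> < cdf D t0"
    using order_tendstoD(1)[OF cdf_lim_at_top_prob \<alpha>(2)] by (auto simp: eventually_at_top_linorder)
  then have nonempty: "S \<noteq> {}"
    unfolding S_def by (auto intro!: exI[of _ t0])
  obtain b where b: "\<And>t. t \<le> b \<Longrightarrow> cdf D t < \<alpha>"
    using order_tendstoD(2)[OF cdf_lim_at_bot \<alpha>(1)] by (auto simp: eventually_at_bot_linorder)
  have bdd: "bdd_below S"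
  proof (rule bdd_belowI)
    fix s assume "s \<in> S"
    then show "b \<le> s"
      using b[of s] by (force simp: S_def)
  qed
  show "cdf D t < \<alpha>" if "t < v" for t
    using cInf_lower[OF _ bdd, of t] that by (force simp: S_def v_def)
  show "\<alpha> \<le> cdf D v"
  proof (rule ccontr)
    assume "\<not> \<alpha> \<le> cdf D v"
    moreover have "(cdf D \<longlongrightarrow> cdf D v) (at_right v)"
      using cdf_is_right_cont by (simp add: continuous_within)
    ultimately have "eventually (\<lambda>t. cdf D t < \<alpha>) (at_right v)"
      by (intro order_tendstoD(2)) auto
    then obtain e where "v < e" and e: "\<And>t. v < t \<Longrightarrow> t < e \<Longrightarrow> cdf D t < \<alpha>"
      by (auto simp: eventually_at_right_field)
    then obtain s where "s \<in> S" "s < e"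
      using cInf_lessD[OF nonempty, of e] by (auto simp: v_def S_def)
    moreover have "v \<le> s"
      using cInf_lower[OF \<open>s \<in> S\<close> bdd] by (simp add: v_def S_def)
    ultimately show False
      using e[of s] \<open>\<not> \<alpha> \<le> cdf D v\<close> by (cases "v = s") (auto simp: S_def)
  qed
qed

lemma
  assumes Q: "prob_space Q" and f[measurable]: "f \<in> borel_measurable Q" and \<alpha>: "0 < \<alpha>" "\<alpha> < 1"
    and no_atom: "measure Q {\<theta>\<in>space Q. f \<theta> = quantile Q f \<alpha>} = 0"
  shows measure_ge_quantile: "measure Q {\<theta>\<in>space Q. quantile Q f \<alpha> \<le> f \<theta>} \<le> 1 - \<alpha>"
    and measure_ge_below_quantile:
      "t < quantile Q f \<alpha> \<Longrightarrow> 1 - \<alpha> < measure Q {\<theta>\<in>space Q. t \<le> f \<theta>}"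
proof -
  interpret prob_space Q by (rule Q)
  define D where "D = distr Q borel f"
  interpret D: real_distribution D
    unfolding D_def by (rule real_distribution_distr) simp
  have v: "quantile Q f \<alpha> = Inf {t. \<alpha> \<le> cdf D t}"
    unfolding D_def by (rule quantile_eq_cdf[OF Q f])
  have measure_D: "measure Q {\<theta>\<in>space Q. f \<theta> \<in> A} = measure D A" if "A \<in> sets borel" for A
    unfolding D_def using that by (subst measure_distr) (auto intro!: arg_cong2[where f=measure])
  have ge: "measure Q {\<theta>\<in>space Q. t \<le> f \<theta>} = 1 - measure D {..<t}" for t
    using measure_D[of "{t..}"] D.prob_compl[of "{..<t}"]
    by (simp add: Compl_eq_Diff_UNIV[symmetric] Compl_lessThan)
  have "cdf D t = measure D {..<t} + measure D {t}" for t
    unfolding cdf_def2 by (subst D.finite_measure_Union[symmetric]) (auto intro!: arg_cong2[where f=measure])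
  moreover have "measure D {quantile Q f \<alpha>} = 0"
    using no_atom measure_D[of "{quantile Q f \<alpha>}"] by simp
  ultimately show "measure Q {\<theta>\<in>space Q. quantile Q f \<alpha> \<le> f \<theta>} \<le> 1 - \<alpha>"
    using ge cdf_generalized_inverse_ge[OF D.real_distribution_axioms \<alpha>] by (simp add: v)
  show "1 - \<alpha> < measure Q {\<theta>\<in>space Q. t \<le> f \<theta>}" if "t < quantile Q f \<alpha>"
  proof -
    have "measure D {..<t} \<le> cdf D t"
      unfolding cdf_def2 by (rule D.finite_measure_mono) auto
    then show ?thesis
      using ge[of t] cdf_less_below_generalized_inverse[OF D.real_distribution_axioms \<alpha>, of t] that
      by (simp add: v)
  qed
qed

lemma measure_strip_below_tendsto_zero:
  assumes "prob_space Q" and [measurable]: "f \<in> borel_measurable Q" and "0 < c"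
  shows "(\<lambda>k. measure Q {\<theta>\<in>space Q. v - c / real (Suc k) < f \<theta> \<and> f \<theta> < v}) \<longlonglongrightarrow> 0"
proof -
  interpret prob_space Q by fact
  define A where "A k = {\<theta>\<in>space Q. v - c / real (Suc k) < f \<theta> \<and> f \<theta> < v}" for k
  have "decseq A"
  proof (rule decseq_SucI)
    fix k
    have "c / real (Suc (Suc k)) \<le> c / real (Suc k)"
      using \<open>0 < c\<close> by (intro divide_left_mono) auto
    then show "A (Suc k) \<subseteq> A k"
      by (auto simp: A_def)
  qed
  moreover have empty: "(\<Inter>k. A k) = {}"
  proof -
    have "\<theta> \<notin> (\<Inter>k. A k)" if "f \<theta> < v" for \<theta>
    proof -
      have "(\<lambda>k. c / real (Suc k)) \<longlonglongrightarrow> 0"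
        using tendsto_mult_right_zero[OF LIMSEQ_inverse_real_of_nat, of c] by (simp add: divide_inverse)
      then have "(\<lambda>k. v - c / real (Suc k)) \<longlonglongrightarrow> v - 0"
        by (intro tendsto_diff tendsto_const)
      then have "eventually (\<lambda>k. f \<theta> < v - c / real (Suc k)) sequentially"
        using that by (intro order_tendstoD(1)) simp_all
      then obtain k where "f \<theta> < v - c / real (Suc k)"
        unfolding eventually_sequentially by blast
      then have "\<theta> \<notin> A k"
        by (simp add: A_def)
      then show ?thesis
        by blast
    qed
    then show ?thesis
      by (auto simp: A_def)
  qed
  moreover have "A k \<in> sets Q" for k
    unfolding A_def by measurable
  ultimately have "(\<lambda>k. measure Q (A k)) \<longlonglongrightarrow> measure Q (\<Inter>k. A k)"
    by (intro finite_Lim_measure_decseq) auto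
  then show ?thesis
    unfolding empty by (simp add: A_def)
qed

subsection \<open>Blocks of samples\<close>

lemma measurable_PiM_kernel:
  fixes P :: "'p \<Rightarrow> 'e measure"
  assumes P: "P \<in> PN \<rightarrow>\<^sub>M prob_algebra N"
  shows "(\<lambda>\<theta>. PiM UNIV (\<lambda>_::nat. P \<theta>)) \<in> PN \<rightarrow>\<^sub>M prob_algebra (PiM UNIV (\<lambda>_::nat. N))"
proof (rule measurable_prob_algebra_generated[OF sets_PiM Int_stable_prod_algebra
      prod_algebra_sets_into_space])
  fix \<theta> assume "\<theta> \<in> space PN"
  then have "P \<theta> \<in> space (prob_algebra N)"
    using measurable_space[OF P] by blast
  then show "prob_space (PiM UNIV (\<lambda>_::nat. P \<theta>))"
    and "sets (PiM UNIV (\<lambda>_::nat. P \<theta>)) = sets (PiM UNIV (\<lambda>_::nat. N))"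
    by (auto simp: space_prob_algebra intro!: prob_space_PiM sets_PiM_cong)
next
  fix A assume "A \<in> prod_algebra UNIV (\<lambda>_::nat. N)"
  then obtain J E where A: "A = prod_emb UNIV (\<lambda>_::nat. N) J (\<Pi>\<^sub>E j\<in>J. E j)"
    and J: "finite J" and E: "\<And>i. i \<in> J \<Longrightarrow> E i \<in> sets N"
    by (auto elim!: prod_algebraE)
  have cylinder: "emeasure (PiM UNIV (\<lambda>_::nat. P \<theta>)) A = (\<Prod>j\<in>J. emeasure (P \<theta>) (E j))"
    if "\<theta> \<in> space PN" for \<theta>
  proof -
    have "sets (P \<theta>) = sets N" "prob_space (P \<theta>)"
      using measurable_space[OF P that] by (auto simp: space_prob_algebra)
    moreover have "A = prod_emb UNIV (\<lambda>_::nat. P \<theta>) J (\<Pi>\<^sub>E j\<in>J. E j)"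
      unfolding A prod_emb_def using sets_eq_imp_space_eq[OF \<open>sets (P \<theta>) = sets N\<close>] by simp
    ultimately show ?thesis
      using J E by (simp add: emeasure_PiM_emb)
  qed
  have "(\<lambda>\<theta>. \<Prod>j\<in>J. emeasure (P \<theta>) (E j)) \<in> borel_measurable PN"
    using E by (intro borel_measurable_prod_ennreal measurable_compose[OF
        measurable_prob_algebraD[OF P] measurable_emeasure_subprob_algebra])
  then show "(\<lambda>\<theta>. emeasure (PiM UNIV (\<lambda>_::nat. P \<theta>)) A) \<in> borel_measurable PN"
    by (rule measurable_cong[THEN iffD1, rotated]) (simp add: cylinder)
qed

locale iid_blocks =
  fixes PN :: "'p measure" and P :: "'p \<Rightarrow> 'e::euclidean_space measure"
  assumes prob_space_PN: "prob_space PN"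
    and P_kernel: "P \<in> PN \<rightarrow>\<^sub>M prob_algebra borel"
begin

abbreviation block_space :: "('p \<times> (nat \<Rightarrow> 'e)) measure" where
  "block_space \<equiv> PN \<Otimes>\<^sub>M PiM UNIV (\<lambda>_::nat. borel)"

definition block_kernel :: "'p \<Rightarrow> ('p \<times> (nat \<Rightarrow> 'e)) measure" where
  "block_kernel \<theta> = distr (PiM UNIV (\<lambda>_::nat. P \<theta>)) block_space (\<lambda>s. (\<theta>, s))"

lemma block_law_eq_bind: "block_law PN P = PN \<bind> block_kernel"
  unfolding block_law_def block_kernel_def ..

lemma measurable_block_kernel: "block_kernel \<in> PN \<rightarrow>\<^sub>M prob_algebra block_space"
  unfolding block_kernel_def
  by (rule measurable_distr_prob_space2[OF measurable_PiM_kernel[OF P_kernel]]) simp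

lemma block_kernel_subprob: "block_kernel \<in> PN \<rightarrow>\<^sub>M subprob_algebra block_space"
  by (rule measurable_prob_algebraD[OF measurable_block_kernel])

lemma prob_space_block_law: "prob_space (block_law PN P)"
  unfolding block_law_eq_bind
  by (rule prob_space_bind'[OF _ measurable_block_kernel]) (simp add: space_prob_algebra prob_space_PN)

lemma sets_block_law: "sets (block_law PN P) = sets block_space"
  unfolding block_law_eq_bind
  by (rule sets_bind[OF sets_kernel[OF block_kernel_subprob]])
    (use prob_space.not_empty[OF prob_space_PN] in auto)

lemma measurable_Pair_sample:
  assumes "\<theta> \<in> space PN"
  shows "(\<lambda>s. (\<theta>, s)) \<in> PiM UNIV (\<lambda>_::nat. P \<theta>) \<rightarrow>\<^sub>M block_space"
proof -
  have "sets (PiM UNIV (\<lambda>_::nat. P \<theta>)) = sets (PiM UNIV (\<lambda>_::nat. borel :: 'e measure))"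
    using measurable_space[OF P_kernel assms] by (intro sets_PiM_cong) (auto simp: space_prob_algebra)
  then have "(\<lambda>s. s) \<in> PiM UNIV (\<lambda>_::nat. P \<theta>) \<rightarrow>\<^sub>M PiM UNIV (\<lambda>_::nat. borel :: 'e measure)"
    by (simp cong: measurable_cong_sets)
  then show ?thesis
    using assms by (intro measurable_Pair) auto
qed

lemma AE_block_law:
  assumes [measurable]: "Measurable.pred block_space A"
    and "AE \<theta> in PN. AE s in PiM UNIV (\<lambda>_::nat. P \<theta>). A (\<theta>, s)"
  shows "AE b in block_law PN P. A b"
  unfolding block_law_eq_bind
proof (subst AE_bind[OF block_kernel_subprob], measurable)
  show "AE \<theta> in PN. AE b in block_kernel \<theta>. A b"
    using assms(2) AE_space
  proof eventually_elim
    case (elim \<theta>)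
    then show ?case
      unfolding block_kernel_def
      by (subst AE_distr_iff[OF measurable_Pair_sample[OF elim(2)]]) auto
  qed
qed

lemma distr_block_law_fst: "distr (block_law PN P) PN fst = PN"
proof (rule measure_eqI)
  fix A assume "A \<in> sets (distr (block_law PN P) PN fst)"
  then have A: "A \<in> sets PN" by simp
  have fst: "fst \<in> block_law PN P \<rightarrow>\<^sub>M PN"
    by (simp add: measurable_cong_sets[OF sets_block_law refl])
  let ?C = "A \<times> space (PiM UNIV (\<lambda>_::nat. borel :: 'e measure))"
  have "fst -` A \<inter> space (block_law PN P) = ?C"
    using sets_eq_imp_space_eq[OF sets_block_law] sets.sets_into_space[OF A]
    by (auto simp: space_pair_measure)
  then have "emeasure (distr (block_law PN P) PN fst) A = emeasure (block_law PN P) ?C"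
    by (simp add: emeasure_distr[OF fst A])
  also have "\<dots> = (\<integral>\<^sup>+\<theta>. emeasure (block_kernel \<theta>) ?C \<partial>PN)"
    unfolding block_law_eq_bind
    by (rule emeasure_bind[OF _ block_kernel_subprob])
      (use prob_space.not_empty[OF prob_space_PN] A in auto)
  also have "\<dots> = (\<integral>\<^sup>+\<theta>. indicator A \<theta> \<partial>PN)"
  proof (rule nn_integral_cong)
    fix \<theta> assume \<theta>: "\<theta> \<in> space PN"
    then interpret prob_space "PiM UNIV (\<lambda>_::nat. P \<theta>)"
      using measurable_space[OF measurable_PiM_kernel[OF P_kernel]] by (simp add: space_prob_algebra)
    have "(\<lambda>s. (\<theta>, s)) -` ?C \<inter> space (PiM UNIV (\<lambda>_::nat. P \<theta>))
        = (if \<theta> \<in> A then space (PiM UNIV (\<lambda>_::nat. P \<theta>)) else {})"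
      using measurable_space[OF measurable_Pair_sample[OF \<theta>]] by (auto simp: space_pair_measure)
    then show "emeasure (block_kernel \<theta>) ?C = indicator A \<theta>"
      unfolding block_kernel_def using A
      by (subst emeasure_distr[OF measurable_Pair_sample[OF \<theta>]]) (auto simp: emeasure_space_1)
  qed
  also have "\<dots> = emeasure PN A"
    using A by simp
  finally show "emeasure (distr (block_law PN P) PN fst) A = emeasure PN A" .
qed simp


lemma AE_sampling_empirical_freq:
  assumes [measurable]: "Measurable.pred block_space A"
  shows "AE \<omega> in sampling_space PN P. (\<lambda>n. empirical_freq n (\<lambda>i. A (\<omega> i)))
    \<longlonglongrightarrow> measure (block_law PN P) {b\<in>space (block_law PN P). A b}"
  unfolding sampling_space_def
  by (rule strong_law_empirical_freq[OF prob_space_block_law])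
    (simp add: measurable_cong_sets[OF sets_block_law refl])

lemma measure_block_law_fst:
  assumes [measurable]: "Measurable.pred PN A"
  shows "measure (block_law PN P) {b\<in>space (block_law PN P). A (fst b)} = measure PN {\<theta>\<in>space PN. A \<theta>}"
proof -
  have fst: "fst \<in> block_law PN P \<rightarrow>\<^sub>M PN"
    by (simp add: measurable_cong_sets[OF sets_block_law refl])
  then have "{b\<in>space (block_law PN P). A (fst b)} = fst -` {\<theta>\<in>space PN. A \<theta>} \<inter> space (block_law PN P)"
    using measurable_space[OF fst] by auto
  then have "measure (block_law PN P) {b\<in>space (block_law PN P). A (fst b)}
      = measure (distr (block_law PN P) PN fst) {\<theta>\<in>space PN. A \<theta>}"
    by (simp add: measure_distr[OF fst])
  then show ?thesis
    by (simp add: distr_block_law_fst)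
qed

lemma AE_sampling_empirical_freq_fst:
  assumes [measurable]: "Measurable.pred PN A"
  shows "AE \<omega> in sampling_space PN P. (\<lambda>n. empirical_freq n (\<lambda>i. A (fst (\<omega> i))))
    \<longlonglongrightarrow> measure PN {\<theta>\<in>space PN. A \<theta>}"
  using AE_sampling_empirical_freq[of "\<lambda>b. A (fst b)"] by (simp add: measure_block_law_fst)

context
  fixes h :: "real \<Rightarrow> 'e \<Rightarrow> real" and x :: real
  assumes h_measurable [measurable]: "h x \<in> borel_measurable borel"
begin

lemma measurable_Hval [measurable]: "Hval P h x \<in> borel_measurable PN"
  unfolding Hval_def
  by (rule measurable_compose[OF measurable_prob_algebraD[OF P_kernel]
        integral_measurable_subprob_algebra[OF h_measurable]])

context
  assumes second_moment: "AE \<theta> in PN. (\<integral>\<^sup>+\<xi>. ennreal ((h x \<xi>)\<^sup>2) \<partial>P \<theta>) < \<infinity>"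
begin

lemma AE_block_law_Hhat_eventually_close:
  assumes "0 < \<delta>"
  shows "AE b in block_law PN P. \<exists>M. \<forall>m\<ge>M. \<bar>Hhat h x m (snd b) - Hval P h x (fst b)\<bar> < \<delta>"
proof (rule AE_block_law)
  show "Measurable.pred block_space (\<lambda>b. \<exists>M. \<forall>m\<ge>M. \<bar>Hhat h x m (snd b) - Hval P h x (fst b)\<bar> < \<delta>)"
    unfolding Hhat_def by measurable
  show "AE \<theta> in PN. AE s in PiM UNIV (\<lambda>_::nat. P \<theta>).
      \<exists>M. \<forall>m\<ge>M. \<bar>Hhat h x m (snd (\<theta>, s)) - Hval P h x (fst (\<theta>, s))\<bar> < \<delta>"
    using second_moment AE_space
  proof eventually_elim
    case (elim \<theta>)
    have "P \<theta> \<in> space (prob_algebra borel)"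
      using measurable_space[OF P_kernel elim(2)] .
    then have sets_P: "sets (P \<theta>) = sets borel" and prob: "prob_space (P \<theta>)"
      by (auto simp: space_prob_algebra)
    have [measurable]: "h x \<in> borel_measurable (P \<theta>)"
      by (simp add: measurable_cong_sets[OF sets_P refl])
    have "integrable (P \<theta>) (\<lambda>\<xi>. (h x \<xi>)\<^sup>2)"
      using elim(1) by (simp add: integrable_iff_bounded)
    then have "AE s in PiM UNIV (\<lambda>_::nat. P \<theta>).
        (\<lambda>m. (\<Sum>j<m. h x (s j)) / real m) \<longlonglongrightarrow> (\<integral>\<xi>. h x \<xi> \<partial>P \<theta>)"
      by (rule strong_law_of_large_numbers[OF prob, rotated]) simp
    then show ?case
    proof (rule eventually_mono)
      fix s assume "(\<lambda>m. (\<Sum>j<m. h x (s j)) / real m) \<longlonglongrightarrow> (\<integral>\<xi>. h x \<xi> \<partial>P \<theta>)"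
      from tendstoD[OF this \<open>0 < \<delta>\<close>]
      show "\<exists>M. \<forall>m\<ge>M. \<bar>Hhat h x m (snd (\<theta>, s)) - Hval P h x (fst (\<theta>, s))\<bar> < \<delta>"
        by (simp add: eventually_sequentially Hhat_def Hval_def dist_real_def)
    qed
  qed
qed

lemma Hhat_deviation_prob_tendsto_zero:
  assumes "0 < \<delta>"
  shows "(\<lambda>M. measure (block_law PN P)
    {b\<in>space (block_law PN P). \<exists>m\<ge>M. \<delta> \<le> \<bar>Hhat h x m (snd b) - Hval P h x (fst b)\<bar>}) \<longlonglongrightarrow> 0"
proof -
  interpret B: prob_space "block_law PN P"
    by (rule prob_space_block_law)
  define E where "E M = {b\<in>space (block_law PN P). \<exists>m\<ge>M. \<delta> \<le> \<bar>Hhat h x m (snd b) - Hval P h x (fst b)\<bar>}"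
    for M
  have "E M \<in> sets block_space" for M
    unfolding E_def Hhat_def sets_eq_imp_space_eq[OF sets_block_law] by measurable
  then have E_sets: "E M \<in> sets (block_law PN P)" for M
    by (simp add: sets_block_law)
  have "decseq E"
    unfolding decseq_def E_def by (auto intro: order_trans)
  then have "(\<lambda>M. measure (block_law PN P) (E M)) \<longlonglongrightarrow> measure (block_law PN P) (\<Inter>M. E M)"
    using E_sets by (intro B.finite_Lim_measure_decseq) auto
  moreover have "emeasure (block_law PN P) (\<Inter>M. E M) = 0"
  proof (rule AE_iff_measurable[THEN iffD1, OF _ _ AE_block_law_Hhat_eventually_close[OF assms]])
    show "(\<Inter>M. E M) \<in> sets (block_law PN P)"
      using E_sets by auto
    show "{b \<in> space (block_law PN P). \<not> (\<exists>M. \<forall>m\<ge>M. \<bar>Hhat h x m (snd b) - Hval P h x (fst b)\<bar> < \<delta>)}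
        = (\<Inter>M. E M)"
      unfolding E_def by (auto simp: not_less)
  qed
  ultimately have "(\<lambda>M. measure (block_law PN P) (E M)) \<longlonglongrightarrow> 0"
    by (simp add: B.emeasure_eq_measure)
  then show ?thesis
    unfolding E_def .
qed

lemma AE_misclassified_freq_tendsto_zero:
  assumes \<alpha>: "0 < \<alpha>" "\<alpha> < 1"
    and tail_at: "measure PN {\<theta>\<in>space PN. v \<le> Hval P h x \<theta>} \<le> 1 - \<alpha>"
    and tail_below: "\<And>t. t < v \<Longrightarrow> 1 - \<alpha> < measure PN {\<theta>\<in>space PN. t \<le> Hval P h x \<theta>}"
  shows "AE \<omega> in sampling_space PN P.
    ((\<lambda>(n, m). (\<Sum>i<n. \<bar>of_bool (Hhat h x m (snd (\<omega> i)) \<ge> vhat h x \<alpha> n m \<omega>)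
      - of_bool (Hval P h x (fst (\<omega> i)) \<ge> v)\<bar>) / real n) \<longlongrightarrow> 0) (sequentially \<times>\<^sub>F sequentially)"
proof -
  define d where "d k = 1 / real (Suc k)" for k
  have d: "0 < d k" for k
    by (simp add: d_def)
  have tail_below_steps: "1 - \<alpha> < measure PN {\<theta>\<in>space PN. v - d k \<le> Hval P h x \<theta>}" for k
    using tail_below[of "v - d k"] d[of k] by simp
  have strip: "(\<lambda>k. measure PN {\<theta>\<in>space PN. v - 3 * d k < Hval P h x \<theta> \<and> Hval P h x \<theta> < v})
      \<longlonglongrightarrow> 0"
    using measure_strip_below_tendsto_zero[OF prob_space_PN, of "Hval P h x" 3 v] by (simp add: d_def)
  have "AE \<omega> in sampling_space PN P. (\<lambda>n. empirical_freq n (\<lambda>i. v \<le> Hval P h x (fst (\<omega> i))))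
      \<longlonglongrightarrow> measure PN {\<theta>\<in>space PN. v \<le> Hval P h x \<theta>}"
    by (rule AE_sampling_empirical_freq_fst) measurable
  moreover have "AE \<omega> in sampling_space PN P. \<forall>k.
      (\<lambda>n. empirical_freq n (\<lambda>i. v - d k \<le> Hval P h x (fst (\<omega> i))))
        \<longlonglongrightarrow> measure PN {\<theta>\<in>space PN. v - d k \<le> Hval P h x \<theta>}"
    unfolding AE_all_countable by (intro allI AE_sampling_empirical_freq_fst) measurable
  moreover have "AE \<omega> in sampling_space PN P. \<forall>k.
      (\<lambda>n. empirical_freq n (\<lambda>i. v - 3 * d k < Hval P h x (fst (\<omega> i)) \<and> Hval P h x (fst (\<omega> i)) < v))
        \<longlonglongrightarrow> measure PN {\<theta>\<in>space PN. v - 3 * d k < Hval P h x \<theta> \<and> Hval P h x \<theta> < v}"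
    unfolding AE_all_countable by (intro allI AE_sampling_empirical_freq_fst) measurable
  moreover have "AE \<omega> in sampling_space PN P. \<forall>k M.
      (\<lambda>n. empirical_freq n (\<lambda>i. \<exists>m\<ge>M. d k \<le> \<bar>Hhat h x m (snd (\<omega> i)) - Hval P h x (fst (\<omega> i))\<bar>))
        \<longlonglongrightarrow> measure (block_law PN P)
          {b\<in>space (block_law PN P). \<exists>m\<ge>M. d k \<le> \<bar>Hhat h x m (snd b) - Hval P h x (fst b)\<bar>}"
    unfolding AE_all_countable Hhat_def by (intro allI AE_sampling_empirical_freq) measurable
  ultimately show ?thesis
  proof eventually_elim
    case (elim \<omega>)
    show ?case
      unfolding vhat_def
      by (rule misclassified_freq_tendsto_zero[OF \<alpha> elim(1) tail_at elim(2)[rule_format]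
            tail_below_steps elim(3)[rule_format] strip elim(4)[rule_format]
            Hhat_deviation_prob_tendsto_zero[OF d]])
  qed
qed

end

end

end

theorem proposition2:
  fixes X :: "real set" and x \<alpha> :: real
    and PN :: "'p measure" and P :: "'p \<Rightarrow> 'e::euclidean_space measure"
    and h :: "real \<Rightarrow> 'e \<Rightarrow> real"
  assumes "compact X" and "X \<noteq> {}" and "x \<in> X"
    and "0 < \<alpha>" and "\<alpha> < 1"
    and "prob_space PN"
    and "P \<in> measurable PN (prob_algebra borel)"
    and "\<And>y. y \<in> X \<Longrightarrow> h y \<in> borel_measurable borel"
    and "A1 X PN P h"
    and "measure PN {\<theta> \<in> space PN. Hval P h x \<theta> = quantile PN (Hval P h x) \<alpha>} = 0"
  shows "AE \<omega> in sampling_space PN P.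
     ((\<lambda>(n, m). (\<Sum>i<n. \<bar>of_bool (Hhat h x m (snd (\<omega> i)) \<ge> vhat h x \<alpha> n m \<omega>)
                        - of_bool (Hval P h x (fst (\<omega> i)) \<ge> quantile PN (Hval P h x) \<alpha>)\<bar>) / real n)
      \<longlongrightarrow> (0::real)) (sequentially \<times>\<^sub>F sequentially)"
proof -
  interpret iid_blocks PN P
    using assms(6,7) by (rule iid_blocks.intro)
  have h_measurable: "h x \<in> borel_measurable borel"
    using assms(8)[OF assms(3)] .
  have second_moment: "AE \<theta> in PN. (\<integral>\<^sup>+\<xi>. ennreal ((h x \<xi>)\<^sup>2) \<partial>P \<theta>) < \<infinity>"
    using assms(3,9) unfolding A1_def by blast
  note Hval_measurable = measurable_Hval[of h x, OF h_measurable]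
  show ?thesis
    using measure_ge_quantile[OF assms(6) Hval_measurable assms(4,5,10)]
      measure_ge_below_quantile[OF assms(6) Hval_measurable assms(4,5,10)]
    by (intro AE_misclassified_freq_tendsto_zero[of h x, OF h_measurable second_moment assms(4,5)])
qed

end
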